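(* Let $A\in P(n)$, $m\in\mathbb N$, $p_m=(1,\dots,1)^T\in\mathbb C^m$, and let $A^{(m)}=p_mp_m^*\otimes A\in P(nm)$ (the $m\times m$ block matrix all of whose blocks equal $A$). Then $I(A^{(m)})=I(A)$ and $I(sp,A^{(m)})=I(sp,A)$.
   Context: $P(k)$ denotes positive semidefinite complex $k\times k$ matrices; $\otimes$ is the Kronecker product; $\circ$ is the Hadamard (entrywise) product. For $C\in P(k)$, with $P_k$ the all-ones $k\times k$ matrix, $I(C)=\max\{\lambda\ge0: C-\lambda P_k\ge0\}$, and $I(sp,C)=\min\{\|C\circ B\|: B\in P(k),\ \|B\|=1\}$, where $\|\cdot\|$ is the spectral (operator) norm. *)

theory Defs
  imports Complex_Main
begin

text \<open>Square complex matrices of size k are represented as functions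
  nat \<Rightarrow> nat \<Rightarrow> complex; only entries with indices below k are ever read.
  Vectors in C^k are functions nat \<Rightarrow> complex, only entries below k matter.\<close>

type_synonym cmat = "nat \<Rightarrow> nat \<Rightarrow> complex"
type_synonym cvec = "nat \<Rightarrow> complex"

definition qform :: "nat \<Rightarrow> cmat \<Rightarrow> cvec \<Rightarrow> complex" where
  "qform k C x = (\<Sum>i<k. \<Sum>j<k. cnj (x i) * C i j * x j)"

definition psd :: "nat \<Rightarrow> cmat \<Rightarrow> bool" where
  "psd k C \<longleftrightarrow> (\<forall>x. qform k C x \<in> \<real> \<and> 0 \<le> Re (qform k C x))"

definition vnorm :: "nat \<Rightarrow> cvec \<Rightarrow> real" where
  "vnorm k x = sqrt (\<Sum>i<k. (cmod (x i))\<^sup>2)"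

definition mvmult :: "nat \<Rightarrow> cmat \<Rightarrow> cvec \<Rightarrow> cvec" where
  "mvmult k C x = (\<lambda>i. \<Sum>j<k. C i j * x j)"

definition opnorm :: "nat \<Rightarrow> cmat \<Rightarrow> real" where
  "opnorm k C = Sup {vnorm k (mvmult k C x) | x. vnorm k x \<le> 1}"

text \<open>All-ones matrix P_k, Hadamard product, Kronecker product
  (B of size p, C of size q; result of size p*q, index i = a*q + r).\<close>
definition ones :: cmat where
  "ones = (\<lambda>i j. 1)"

definition hadamard :: "cmat \<Rightarrow> cmat \<Rightarrow> cmat" where
  "hadamard C B = (\<lambda>i j. C i j * B i j)"

definition kron :: "nat \<Rightarrow> cmat \<Rightarrow> cmat \<Rightarrow> cmat" where
  "kron q B C = (\<lambda>i j. B (i div q) (j div q) * C (i mod q) (j mod q))"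

definition Iidx :: "nat \<Rightarrow> cmat \<Rightarrow> real" where
  "Iidx k C = Sup {t. t \<ge> 0 \<and> psd k (\<lambda>i j. C i j - of_real t * ones i j)}"

definition Isp :: "nat \<Rightarrow> cmat \<Rightarrow> real" where
  "Isp k C = Inf {opnorm k (hadamard C B) | B. psd k B \<and> opnorm k B = 1}"

end

theory Submission
  imports Defs "HOL-Analysis.Convex"
begin

text \<open>The quadratic form of A^(m) = p_m p_m^* \<otimes> A at x is the quadratic form of A at the
  vector of block sums of x. Hence A^(m) - \<lambda> P_nm = (A - \<lambda> P_n)^(m) is positive semidefinite
  exactly when A - \<lambda> P_n is, which gives I(A^(m)) = I(A).

  For I(sp,-), padding B \<in> P(n) with zeros gives a matrix of P(nm) with the same norm, whose
  Hadamard product with A^(m) is the padding of A \<circ> B; so I(sp,A^(m)) \<le> I(sp,A).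
  Conversely, let B \<in> P(nm) with ||B|| = 1 and let x be a unit vector. Then x = W z for a
  vector z with ||z|| = ||x|| and a contraction W : C^n \<rightarrow> C^nm of the form
  (W z)_(an+r) = w_(an+r) z_r. The compression C = W^* B W \<in> P(n) satisfies
  A \<circ> C = W^* (A^(m) \<circ> B) W and ||C|| \<ge> z^* C z = x^* B x, hence
  I(sp,A) x^* B x \<le> ||A^(m) \<circ> B||. Since B is positive semidefinite, the supremum of
  x^* B x over unit vectors x is ||B|| = 1.\<close>

lemma sum_lessThan_mult_blocks:
  fixes f :: "nat \<Rightarrow> 'a::comm_monoid_add"
  shows "(\<Sum>i<n*m. f i) = (\<Sum>a<m. \<Sum>r<n. f (a*n+r))"
proof -
  have "(\<Sum>i<n*m. f i) = (\<Sum>a<m. sum f {a*n..<a*n+n})"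
    using sum.nat_group[of f n m] by (simp add: mult.commute)
  also have "\<dots> = (\<Sum>a<m. \<Sum>r<n. f (a*n+r))"
    by (rule sum.cong[OF refl])
       (simp add: sum.atLeastLessThan_shift_0[of f] lessThan_atLeast0 add.commute comp_def)
  finally show ?thesis .
qed

lemma cmod_sum_mult_power2_le:
  fixes a b :: "'i \<Rightarrow> complex"
  shows "(cmod (\<Sum>i\<in>I. a i * b i))\<^sup>2 \<le> (\<Sum>i\<in>I. (cmod (a i))\<^sup>2) * (\<Sum>i\<in>I. (cmod (b i))\<^sup>2)"
proof -
  have "cmod (\<Sum>i\<in>I. a i * b i) \<le> (\<Sum>i\<in>I. cmod (a i) * cmod (b i))"
    by (metis (no_types, lifting) norm_mult norm_sum sum.cong)
  then have "(cmod (\<Sum>i\<in>I. a i * b i))\<^sup>2 \<le> (\<Sum>i\<in>I. cmod (a i) * cmod (b i))\<^sup>2"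
    by (simp add: power_mono)
  also have "\<dots> \<le> (\<Sum>i\<in>I. (cmod (a i))\<^sup>2) * (\<Sum>i\<in>I. (cmod (b i))\<^sup>2)"
    by (rule Cauchy_Schwarz_ineq_sum)
  finally show ?thesis .
qed

definition sqnorm :: "nat \<Rightarrow> cvec \<Rightarrow> real" where
  "sqnorm k x = (\<Sum>i<k. (cmod (x i))\<^sup>2)"

lemma sqnorm_nonneg: "0 \<le> sqnorm k x"
  unfolding sqnorm_def by (simp add: sum_nonneg)

lemma vnorm_eq_sqrt_sqnorm: "vnorm k x = sqrt (sqnorm k x)"
  unfolding vnorm_def sqnorm_def ..

lemma vnorm_power2: "(vnorm k x)\<^sup>2 = sqnorm k x"
  by (simp add: vnorm_eq_sqrt_sqnorm sqnorm_nonneg)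

lemma vnorm_nonneg: "0 \<le> vnorm k x"
  by (simp add: vnorm_eq_sqrt_sqnorm sqnorm_nonneg)

lemma vnorm_le_1_iff: "vnorm k x \<le> 1 \<longleftrightarrow> sqnorm k x \<le> 1"
  by (simp add: vnorm_eq_sqrt_sqnorm)

lemma sqnorm_cong: "(\<And>i. i < k \<Longrightarrow> x i = y i) \<Longrightarrow> sqnorm k x = sqnorm k y"
  unfolding sqnorm_def by (intro sum.cong refl) simp

lemma vnorm_cong: "(\<And>i. i < k \<Longrightarrow> x i = y i) \<Longrightarrow> vnorm k x = vnorm k y"
  by (simp add: vnorm_eq_sqrt_sqnorm cong: sqnorm_cong)

lemma vnorm_scale: "vnorm k (\<lambda>i. c * x i) = cmod c * vnorm k x"
  unfolding vnorm_eq_sqrt_sqnorm sqnorm_def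
  by (simp add: norm_mult power_mult_distrib real_sqrt_mult flip: sum_distrib_left)

lemma mvmult_scale_vec: "mvmult k C (\<lambda>j. c * x j) = (\<lambda>i. c * mvmult k C x i)"
  unfolding mvmult_def by (auto simp: sum_distrib_left algebra_simps)

lemma mvmult_scale_mat: "mvmult k (\<lambda>i j. c * C i j) x = (\<lambda>i. c * mvmult k C x i)"
  unfolding mvmult_def by (auto simp: sum_distrib_left algebra_simps)

lemma sqnorm_mvmult_le: "sqnorm k (mvmult k C x) \<le> (\<Sum>i<k. \<Sum>j<k. (cmod (C i j))\<^sup>2) * sqnorm k x"
proof -
  have "sqnorm k (mvmult k C x) = (\<Sum>i<k. (cmod (\<Sum>j<k. C i j * x j))\<^sup>2)"
    unfolding sqnorm_def mvmult_def ..
  also have "\<dots> \<le> (\<Sum>i<k. (\<Sum>j<k. (cmod (C i j))\<^sup>2) * sqnorm k x)"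
    unfolding sqnorm_def by (rule sum_mono) (rule cmod_sum_mult_power2_le)
  finally show ?thesis by (simp add: sum_distrib_right)
qed

lemma bdd_above_opnorm_set: "bdd_above {vnorm k (mvmult k C x) | x. vnorm k x \<le> 1}"
proof (rule bdd_aboveI, safe)
  define F where "F = (\<Sum>i<k. \<Sum>j<k. (cmod (C i j))\<^sup>2)"
  fix x assume "vnorm k x \<le> 1"
  then have "F * sqnorm k x \<le> F"
    using vnorm_le_1_iff F_def by (simp add: mult_left_le sum_nonneg)
  then have "sqnorm k (mvmult k C x) \<le> F"
    using sqnorm_mvmult_le[of k C x] unfolding F_def by linarith
  then show "vnorm k (mvmult k C x) \<le> sqrt F"
    by (simp add: vnorm_eq_sqrt_sqnorm)
qed

lemma vnorm_mvmult_le_opnorm: "vnorm k x \<le> 1 \<Longrightarrow> vnorm k (mvmult k C x) \<le> opnorm k C"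
  unfolding opnorm_def by (rule cSup_upper[OF _ bdd_above_opnorm_set]) blast

lemma opnorm_nonneg: "0 \<le> opnorm k C"
  using vnorm_mvmult_le_opnorm[of k "\<lambda>_. 0" C] vnorm_nonneg[of k "mvmult k C (\<lambda>_. 0)"]
  by (simp add: vnorm_def mvmult_def)

lemma opnorm_leI: "(\<And>x. vnorm k x \<le> 1 \<Longrightarrow> vnorm k (mvmult k C x) \<le> M) \<Longrightarrow> opnorm k C \<le> M"
  unfolding opnorm_def
  by (rule cSup_least) (auto intro!: exI[of _ "\<lambda>_. 0"] simp: vnorm_def)

lemma vnorm_mvmult_le: "vnorm k (mvmult k C x) \<le> opnorm k C * vnorm k x"
proof (cases "vnorm k x = 0")
  case True
  then have "\<forall>i\<in>{..<k}. (cmod (x i))\<^sup>2 = 0"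
    using vnorm_power2[of k x] sum_nonneg_eq_0_iff[of "{..<k}" "\<lambda>i. (cmod (x i))\<^sup>2"]
    by (simp add: sqnorm_def)
  then have "mvmult k C x = (\<lambda>i. 0)"
    unfolding mvmult_def by (intro ext sum.neutral) simp
  then show ?thesis using True by (simp add: vnorm_def)
next
  case False
  define v where "v = vnorm k x"
  have v0: "v > 0" using False vnorm_nonneg[of k x] unfolding v_def by linarith
  have "vnorm k (\<lambda>i. of_real (1/v) * x i) = 1"
    using v0 unfolding vnorm_scale v_def by (simp add: norm_divide)
  then have "vnorm k (mvmult k C (\<lambda>i. of_real (1/v) * x i)) \<le> opnorm k C"
    by (intro vnorm_mvmult_le_opnorm) simp
  then have "vnorm k (mvmult k C x) / v \<le> opnorm k C"
    using v0 by (simp only: mvmult_scale_vec vnorm_scale) (simp add: norm_divide)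
  then show ?thesis using v0 unfolding v_def by (simp add: divide_le_eq mult.commute)
qed

lemma opnorm_cong:
  assumes "\<And>i j. i < k \<Longrightarrow> j < k \<Longrightarrow> C i j = D i j"
  shows "opnorm k C = opnorm k D"
proof -
  have "vnorm k (mvmult k C x) = vnorm k (mvmult k D x)" for x
    unfolding mvmult_def using assms by (intro vnorm_cong sum.cong) auto
  then show ?thesis unfolding opnorm_def by simp
qed

lemma opnorm_scale:
  assumes "c > 0"
  shows "opnorm k (\<lambda>i j. of_real c * C i j) = c * opnorm k C"
proof (rule antisym)
  show "opnorm k (\<lambda>i j. of_real c * C i j) \<le> c * opnorm k C"
    using assms by (intro opnorm_leI) (simp add: mvmult_scale_mat vnorm_scale vnorm_mvmult_le_opnorm)
  have "opnorm k C \<le> opnorm k (\<lambda>i j. of_real c * C i j) / c"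
  proof (rule opnorm_leI)
    fix x assume "vnorm k x \<le> 1"
    then show "vnorm k (mvmult k C x) \<le> opnorm k (\<lambda>i j. of_real c * C i j) / c"
      using vnorm_mvmult_le_opnorm[of k x "\<lambda>i j. of_real c * C i j"] assms
      by (simp add: mvmult_scale_mat vnorm_scale field_simps)
  qed
  then show "c * opnorm k C \<le> opnorm k (\<lambda>i j. of_real c * C i j)"
    using assms by (simp add: field_simps)
qed

definition bilin :: "nat \<Rightarrow> cmat \<Rightarrow> cvec \<Rightarrow> cvec \<Rightarrow> complex" where
  "bilin k C y x = (\<Sum>i<k. \<Sum>j<k. cnj (y i) * C i j * x j)"

lemma bilin_eq_mvmult: "bilin k C y x = (\<Sum>i<k. cnj (y i) * mvmult k C x i)"
  unfolding bilin_def mvmult_def by (simp add: sum_distrib_left mult.assoc)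

lemma qform_eq_mvmult: "qform k C x = (\<Sum>i<k. cnj (x i) * mvmult k C x i)"
  using bilin_eq_mvmult unfolding bilin_def qform_def .

lemma qform_add: "qform k C (\<lambda>i. y i + t * x i) =
   qform k C y + t * bilin k C y x + cnj t * bilin k C x y + cnj t * t * qform k C x"
proof -
  have "qform k C (\<lambda>i. y i + t * x i) = (\<Sum>i<k. \<Sum>j<k. cnj (y i) * C i j * y j
     + t * (cnj (y i) * C i j * x j) + cnj t * (cnj (x i) * C i j * y j)
     + cnj t * t * (cnj (x i) * C i j * x j))"
    unfolding qform_def by (intro sum.cong refl) (simp add: algebra_simps)
  then show ?thesis
    unfolding qform_def bilin_def by (simp add: sum.distrib sum_distrib_left)
qed

lemma qform_scale_mat: "qform k (\<lambda>i j. c * C i j) x = c * qform k C x"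
  unfolding qform_def by (simp add: sum_distrib_left algebra_simps)

lemma qform_cong: "(\<And>i. i < k \<Longrightarrow> x i = y i) \<Longrightarrow> qform k C x = qform k C y"
  unfolding qform_def by (intro sum.cong refl) auto

lemma psd_scale: "psd k C \<Longrightarrow> c \<ge> 0 \<Longrightarrow> psd k (\<lambda>i j. of_real c * C i j)"
  unfolding psd_def qform_scale_mat
  by (metis Re_complex_of_real Reals_cases Reals_of_real mult_nonneg_nonneg of_real_mult)

lemma psd_bilin_cnj:
  assumes "psd k C"
  shows "bilin k C x y = cnj (bilin k C y x)"
proof -
  have "Im (qform k C (\<lambda>i. y i + 1 * x i)) = 0" "Im (qform k C (\<lambda>i. y i + \<i> * x i)) = 0"
    "Im (qform k C x) = 0" "Im (qform k C y) = 0"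
    using assms unfolding psd_def by (auto simp: complex_is_Real_iff)
  then have "Im (bilin k C y x + bilin k C x y) = 0" "Im (\<i> * bilin k C y x - \<i> * bilin k C x y) = 0"
    unfolding qform_add by (simp_all add: algebra_simps)
  then show ?thesis by (simp add: complex_eq_iff)
qed

lemma psd_bilin_Cauchy_Schwarz:
  assumes "psd k C"
  shows "(cmod (bilin k C y x))\<^sup>2 \<le> Re (qform k C y) * Re (qform k C x)"
proof -
  define c where "c = bilin k C y x"
  define p where "p = Re (qform k C x)"
  define q where "q = Re (qform k C y)"
  have p0: "p \<ge> 0" using assms unfolding psd_def p_def by auto
  have key: "0 \<le> q - 2 * s * (cmod c)\<^sup>2 + s\<^sup>2 * (cmod c)\<^sup>2 * p" for s :: real
  proof -
    let ?t = "- (of_real s * cnj c)"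
    have cc: "c * cnj c = of_real ((cmod c)\<^sup>2)" by (rule complex_norm_square[symmetric])
    have e1: "?t * c = - of_real (s * (cmod c)\<^sup>2)"
      by (simp only: mult_minus_left of_real_mult cc[symmetric]) (simp add: algebra_simps)
    have e2: "cnj ?t * cnj c = - of_real (s * (cmod c)\<^sup>2)"
      by (simp only: of_real_mult cc[symmetric]) (simp add: algebra_simps)
    have e3: "cnj ?t * ?t = of_real (s\<^sup>2 * (cmod c)\<^sup>2)"
      by (simp only: of_real_mult cc[symmetric]) (simp add: algebra_simps power2_eq_square)
    have "qform k C (\<lambda>i. y i + ?t * x i)
        = qform k C y + ?t * c + cnj ?t * cnj c + cnj ?t * ?t * qform k C x"
      unfolding qform_add c_def using psd_bilin_cnj[OF assms, of x y] by simp
    also have "\<dots> = qform k C y - 2 * of_real (s * (cmod c)\<^sup>2) + of_real (s\<^sup>2 * (cmod c)\<^sup>2) * qform k C x"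
      unfolding e1 e2 e3 by simp
    finally have "Re (qform k C (\<lambda>i. y i + ?t * x i)) = q - 2 * s * (cmod c)\<^sup>2 + s\<^sup>2 * (cmod c)\<^sup>2 * p"
      unfolding p_def q_def by simp
    then show ?thesis using assms unfolding psd_def by metis
  qed
  show ?thesis
  proof (cases "p = 0")
    case True
    have "(cmod c)\<^sup>2 \<le> 0"
    proof (rule ccontr)
      assume c0: "\<not> (cmod c)\<^sup>2 \<le> 0"
      have "0 \<le> q - 2 * ((q+1) / (2 * (cmod c)\<^sup>2)) * (cmod c)\<^sup>2"
        using key[of "(q+1) / (2 * (cmod c)\<^sup>2)"] True by simp
      then show False using c0 by simp
    qed
    then show ?thesis using True unfolding c_def p_def by simp
  next
    case False
    then have "p > 0" using p0 by simp
    moreover have "0 \<le> q - 2 * (1/p) * (cmod c)\<^sup>2 + (1/p)\<^sup>2 * (cmod c)\<^sup>2 * p" by (rule key)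
    ultimately have "(cmod c)\<^sup>2 \<le> q * p" by (simp add: power2_eq_square field_simps)
    then show ?thesis unfolding c_def p_def q_def .
  qed
qed

lemma cmod_qform_le: "cmod (qform k C x) \<le> opnorm k C * sqnorm k x"
proof -
  have "(cmod (qform k C x))\<^sup>2 \<le> sqnorm k x * sqnorm k (mvmult k C x)"
    unfolding qform_eq_mvmult sqnorm_def
    using cmod_sum_mult_power2_le[of "\<lambda>i. cnj (x i)" "mvmult k C x" "{..<k}"] by simp
  then have "cmod (qform k C x) \<le> vnorm k x * vnorm k (mvmult k C x)"
    by (simp add: vnorm_eq_sqrt_sqnorm real_le_rsqrt flip: real_sqrt_mult)
  also have "\<dots> \<le> vnorm k x * (opnorm k C * vnorm k x)"
    by (rule mult_left_mono[OF vnorm_mvmult_le vnorm_nonneg])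
  also have "\<dots> = opnorm k C * sqnorm k x"
    by (simp flip: vnorm_power2 add: power2_eq_square)
  finally show ?thesis .
qed

lemma psd_sqnorm_mvmult_le:
  assumes "psd k B"
  shows "sqnorm k (mvmult k B x) \<le> opnorm k B * Re (qform k B x)"
proof -
  define y where "y = mvmult k B x"
  have "bilin k B y x = (\<Sum>i<k. cnj (y i) * y i)"
    by (simp add: bilin_eq_mvmult y_def)
  also have "\<dots> = of_real (sqnorm k y)"
    unfolding sqnorm_def of_real_sum by (intro sum.cong refl) (simp only: complex_norm_square mult.commute)
  finally have "(sqnorm k y)\<^sup>2 = (cmod (bilin k B y x))\<^sup>2"
    by (simp add: sqnorm_nonneg)
  also have "\<dots> \<le> Re (qform k B y) * Re (qform k B x)"
    by (rule psd_bilin_Cauchy_Schwarz[OF assms])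
  also have "\<dots> \<le> (opnorm k B * sqnorm k y) * Re (qform k B x)"
  proof (rule mult_right_mono)
    show "Re (qform k B y) \<le> opnorm k B * sqnorm k y"
      using cmod_qform_le[of k B y] complex_Re_le_cmod[of "qform k B y"] by linarith
    show "0 \<le> Re (qform k B x)" using assms unfolding psd_def by auto
  qed
  finally have "sqnorm k y * sqnorm k y \<le> sqnorm k y * (opnorm k B * Re (qform k B x))"
    by (simp add: power2_eq_square algebra_simps)
  moreover have "0 \<le> opnorm k B * Re (qform k B x)"
    using assms opnorm_nonneg[of k B] unfolding psd_def by auto
  ultimately show ?thesis
    using sqnorm_nonneg[of k y] unfolding y_def by (metis mult_le_cancel_left order_le_less)
qed

lemma psd_opnorm_le_qform:
  assumes "psd k B" and M: "\<And>x. vnorm k x \<le> 1 \<Longrightarrow> Re (qform k B x) \<le> M"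
  shows "opnorm k B \<le> M"
proof -
  have M0: "0 \<le> M" using M[of "\<lambda>_. 0"] by (simp add: vnorm_def qform_def)
  have "opnorm k B \<le> sqrt (opnorm k B * M)"
  proof (rule opnorm_leI)
    fix x assume "vnorm k x \<le> 1"
    then have "sqnorm k (mvmult k B x) \<le> opnorm k B * M"
      using psd_sqnorm_mvmult_le[OF assms(1), of x] M[of x] opnorm_nonneg[of k B]
      by (meson mult_left_mono order_trans)
    then show "vnorm k (mvmult k B x) \<le> sqrt (opnorm k B * M)"
      by (simp add: vnorm_eq_sqrt_sqnorm)
  qed
  then have "(opnorm k B)\<^sup>2 \<le> (sqrt (opnorm k B * M))\<^sup>2"
    by (rule power_mono[OF _ opnorm_nonneg])
  then have "(opnorm k B)\<^sup>2 \<le> opnorm k B * M"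
    using opnorm_nonneg[of k B] M0 by simp
  then show ?thesis
    using opnorm_nonneg[of k B] M0
    by (cases "opnorm k B = 0") (simp_all add: power2_eq_square mult_le_cancel_left)
qed

definition id_mat :: cmat where
  "id_mat = (\<lambda>i j. if i = j then 1 else 0)"

lemma mvmult_id_mat: "mvmult k id_mat x i = (if i < k then x i else 0)"
  unfolding mvmult_def id_mat_def by (simp add: if_distrib[of "\<lambda>c. c * _"] cong: if_cong)

lemma psd_id_mat: "psd k id_mat"
proof -
  have "qform k id_mat x = of_real (sqnorm k x)" for x
  proof -
    have "qform k id_mat x = (\<Sum>i<k. cnj (x i) * x i)"
      unfolding qform_eq_mvmult mvmult_id_mat by simp
    also have "\<dots> = of_real (sqnorm k x)"
      unfolding sqnorm_def of_real_sum by (intro sum.cong refl) (simp only: complex_norm_square mult.commute)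
    finally show ?thesis .
  qed
  then show ?thesis unfolding psd_def by (simp add: sqnorm_nonneg)
qed

lemma opnorm_id_mat:
  assumes "k > 0" shows "opnorm k id_mat = 1"
proof (rule antisym)
  have e: "vnorm k (mvmult k id_mat x) = vnorm k x" for x
    by (rule vnorm_cong) (simp add: mvmult_id_mat)
  show "opnorm k id_mat \<le> 1" by (rule opnorm_leI) (simp add: e)
  define e0 :: cvec where "e0 = (\<lambda>i. if i = 0 then 1 else 0)"
  have "vnorm k e0 = 1"
    using assms by (simp add: vnorm_def e0_def if_distrib[of "\<lambda>c. (cmod c)\<^sup>2"] cong: if_cong)
  then show "1 \<le> opnorm k id_mat" using vnorm_mvmult_le_opnorm[of k e0 id_mat] e[of e0] by simp
qed

lemma bdd_below_Isp_set: "bdd_below {opnorm k (hadamard C B) | B. psd k B \<and> opnorm k B = 1}"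
  by (rule bdd_belowI[of _ 0]) (auto simp: opnorm_nonneg)

lemma Isp_mult_opnorm_le:
  assumes "psd k C"
  shows "Isp k A * opnorm k C \<le> opnorm k (hadamard A C)"
proof (cases "opnorm k C = 0")
  case False
  define c where "c = opnorm k C"
  have c0: "c > 0" using False opnorm_nonneg[of k C] unfolding c_def by linarith
  define C' where "C' = (\<lambda>i j. of_real (1/c) * C i j)"
  have "hadamard A C' = (\<lambda>i j. of_real (1/c) * hadamard A C i j)"
    unfolding C'_def hadamard_def by (simp add: algebra_simps)
  then have "opnorm k (hadamard A C') = opnorm k (hadamard A C) / c"
    using opnorm_scale[of "1/c" k "hadamard A C"] c0 by simp
  moreover have "psd k C'" "opnorm k C' = 1"
    using psd_scale[OF assms, of "1/c"] opnorm_scale[of "1/c" k C] c0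
    unfolding C'_def c_def by simp_all
  then have "Isp k A \<le> opnorm k (hadamard A C')"
    unfolding Isp_def by (blast intro: cInf_lower[OF _ bdd_below_Isp_set])
  ultimately show ?thesis using c0 unfolding c_def by (simp add: le_divide_eq)
qed (simp add: opnorm_nonneg)

subsection \<open>Block matrices \<open>p\<^sub>m p\<^sub>m\<^sup>* \<otimes> C\<close>\<close>

lemma qform_kron_ones:
  "qform (n*m) (kron n ones C) x = qform n C (\<lambda>r. \<Sum>a<m. x (a*n+r))"
proof -
  have "qform n C (\<lambda>r. \<Sum>a<m. x (a*n+r))
      = (\<Sum>r<n. \<Sum>s<n. \<Sum>a<m. \<Sum>b<m. cnj (x (a*n+r)) * C r s * x (b*n+s))"
    unfolding qform_def
    by (simp add: sum_distrib_left sum_distrib_right)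
       (rule sum.cong[OF refl], rule sum.cong[OF refl], rule sum.swap)
  also have "\<dots> = (\<Sum>a<m. \<Sum>r<n. \<Sum>b<m. \<Sum>s<n. cnj (x (a*n+r)) * C r s * x (b*n+s))"
    by (subst sum.swap) (simp add: sum.swap[of _ "{..<m}" "{..<n}"])
  also have "\<dots> = qform (n*m) (kron n ones C) x"
    unfolding qform_def sum_lessThan_mult_blocks[of _ n m] kron_def ones_def by simp
  finally show ?thesis ..
qed

lemma psd_kron_ones_iff:
  assumes "m > 0"
  shows "psd (n*m) (kron n ones C) \<longleftrightarrow> psd n C"
proof
  assume "psd n C" then show "psd (n*m) (kron n ones C)"
    unfolding psd_def qform_kron_ones by blast
next
  assume h: "psd (n*m) (kron n ones C)"
  show "psd n C" unfolding psd_def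
  proof
    fix x
    define x0 :: cvec where "x0 = (\<lambda>i. if i < n then x i else 0)"
    have "(\<Sum>a<m. x0 (a*n+r)) = x r" if "r < n" for r
    proof -
      have "x0 (a*n+r) = (if a = 0 then x r else 0)" for a
        using that by (cases a) (simp_all add: x0_def)
      then show ?thesis using assms by simp
    qed
    then have "qform n C x = qform (n*m) (kron n ones C) x0"
      unfolding qform_kron_ones by (intro qform_cong) simp
    then show "qform n C x \<in> \<real> \<and> 0 \<le> Re (qform n C x)" using h unfolding psd_def by simp
  qed
qed

lemma Iidx_kron_ones:
  assumes "m > 0"
  shows "Iidx (n*m) (kron n ones A) = Iidx n A"
proof -
  have "(\<lambda>i j. kron n ones A i j - of_real t * ones i j)
      = kron n ones (\<lambda>i j. A i j - of_real t * ones i j)" for t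
    by (simp add: kron_def ones_def)
  then show ?thesis unfolding Iidx_def by (simp add: psd_kron_ones_iff[OF assms])
qed

subsection \<open>Padding with zeros\<close>

definition pad :: "nat \<Rightarrow> cmat \<Rightarrow> cmat" where
  "pad n B = (\<lambda>i j. if i < n \<and> j < n then B i j else 0)"

lemma sum_lessThan_if_less:
  fixes f :: "nat \<Rightarrow> 'a::comm_monoid_add"
  shows "n \<le> k \<Longrightarrow> (\<Sum>i<k. if i < n then f i else 0) = (\<Sum>i<n. f i)"
  by (rule sum.mono_neutral_cong_right) auto

lemma qform_pad:
  assumes "n \<le> k" shows "qform k (pad n B) x = qform n B x"
proof -
  have "qform k (pad n B) x
      = (\<Sum>i<k. if i < n then (\<Sum>j<k. if j < n then cnj (x i) * B i j * x j else 0) else 0)"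
    unfolding qform_def pad_def by (auto intro!: sum.cong)
  then show ?thesis by (simp add: sum_lessThan_if_less assms qform_def)
qed

lemma psd_pad: "n \<le> k \<Longrightarrow> psd k (pad n B) \<longleftrightarrow> psd n B"
  unfolding psd_def by (simp add: qform_pad)

lemma mvmult_pad:
  assumes "n \<le> k" shows "mvmult k (pad n B) x = (\<lambda>i. if i < n then mvmult n B x i else 0)"
proof
  fix i
  have "mvmult k (pad n B) x i = (\<Sum>j<n. pad n B i j * x j)"
    unfolding mvmult_def by (rule sum.mono_neutral_right) (use assms in \<open>auto simp: pad_def\<close>)
  then show "mvmult k (pad n B) x i = (if i < n then mvmult n B x i else 0)"
    by (simp add: pad_def mvmult_def)
qed

lemma sqnorm_truncate:
  assumes "n \<le> k" shows "sqnorm k (\<lambda>i. if i < n then y i else 0) = sqnorm n y"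
  unfolding sqnorm_def using assms
  by (simp add: if_distrib[of "\<lambda>c. (cmod c)\<^sup>2"] sum_lessThan_if_less cong: if_cong)

lemma opnorm_pad:
  assumes "n \<le> k" shows "opnorm k (pad n B) = opnorm n B"
proof (rule antisym)
  show "opnorm k (pad n B) \<le> opnorm n B"
  proof (rule opnorm_leI)
    fix x assume "vnorm k x \<le> 1"
    then have "vnorm n x \<le> 1"
      using sum_mono2[of "{..<k}" "{..<n}" "\<lambda>i. (cmod (x i))\<^sup>2"] assms
      by (simp add: vnorm_le_1_iff sqnorm_def)
    then show "vnorm k (mvmult k (pad n B) x) \<le> opnorm n B"
      using vnorm_mvmult_le_opnorm
      by (simp add: vnorm_eq_sqrt_sqnorm mvmult_pad sqnorm_truncate assms)
  qed
  show "opnorm n B \<le> opnorm k (pad n B)"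
  proof (rule opnorm_leI)
    fix x assume x: "vnorm n x \<le> 1"
    define x0 where "x0 = (\<lambda>j. if j < n then x j else 0)"
    have "vnorm n (mvmult n B x) = vnorm k (mvmult k (pad n B) x0)"
      unfolding vnorm_eq_sqrt_sqnorm mvmult_pad[OF assms] sqnorm_truncate[OF assms]
      unfolding mvmult_def x0_def by simp
    also have "\<dots> \<le> opnorm k (pad n B)"
      using x by (intro vnorm_mvmult_le_opnorm) (simp add: x0_def vnorm_eq_sqrt_sqnorm sqnorm_truncate assms)
    finally show "vnorm n (mvmult n B x) \<le> opnorm k (pad n B)" .
  qed
qed

lemma Isp_kron_ones_le:
  assumes "n > 0" "m > 0"
  shows "Isp (n*m) (kron n ones A) \<le> Isp n A"
  unfolding Isp_def
proof (rule cInf_greatest)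
  show "{opnorm n (hadamard A B) | B. psd n B \<and> opnorm n B = 1} \<noteq> {}"
    using psd_id_mat opnorm_id_mat[OF assms(1)] by blast
  have nN: "n \<le> n*m" using assms by simp
  fix y assume "y \<in> {opnorm n (hadamard A B) | B. psd n B \<and> opnorm n B = 1}"
  then obtain B where B: "psd n B" "opnorm n B = 1" and y: "y = opnorm n (hadamard A B)"
    by blast
  have "hadamard (kron n ones A) (pad n B) = pad n (hadamard A B)"
    by (simp add: hadamard_def kron_def ones_def pad_def fun_eq_iff)
  then have "y = opnorm (n*m) (hadamard (kron n ones A) (pad n B))"
    by (simp add: y opnorm_pad[OF nN])
  moreover have "psd (n*m) (pad n B)" "opnorm (n*m) (pad n B) = 1"
    using B by (simp_all add: psd_pad[OF nN] opnorm_pad[OF nN])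
  ultimately show "Inf {opnorm (n*m) (hadamard (kron n ones A) B) | B.
      psd (n*m) B \<and> opnorm (n*m) B = 1} \<le> y"
    by (intro cInf_lower[OF _ bdd_below_Isp_set]) blast
qed

subsection \<open>Compression to a single block\<close>

text \<open>With W : C^n \<rightarrow> C^nm, (W v)_(an+r) = w_(an+r) v_r, we have wmul n w = W,
  wmul_adj n m w = W^* and compress n m w C = W^* C W.\<close>

definition wmul :: "nat \<Rightarrow> cvec \<Rightarrow> cvec \<Rightarrow> cvec" where
  "wmul n w v = (\<lambda>i. w i * v (i mod n))"

definition wmul_adj :: "nat \<Rightarrow> nat \<Rightarrow> cvec \<Rightarrow> cvec \<Rightarrow> cvec" where
  "wmul_adj n m w y = (\<lambda>r. \<Sum>a<m. cnj (w (a*n+r)) * y (a*n+r))"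

definition compress :: "nat \<Rightarrow> nat \<Rightarrow> cvec \<Rightarrow> cmat \<Rightarrow> cmat" where
  "compress n m w C = (\<lambda>r s. \<Sum>a<m. \<Sum>b<m. cnj (w (a*n+r)) * C (a*n+r) (b*n+s) * w (b*n+s))"

lemma mvmult_compress:
  "mvmult n (compress n m w C) v r = wmul_adj n m w (mvmult (n*m) C (wmul n w v)) r"
proof -
  have "mvmult n (compress n m w C) v r
      = (\<Sum>s<n. \<Sum>a<m. \<Sum>b<m. cnj (w (a*n+r)) * (C (a*n+r) (b*n+s) * w (b*n+s) * v s))"
    unfolding mvmult_def compress_def sum_distrib_right by (simp add: mult.assoc)
  also have "\<dots> = (\<Sum>a<m. \<Sum>b<m. \<Sum>s<n. cnj (w (a*n+r)) * (C (a*n+r) (b*n+s) * w (b*n+s) * v s))"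
    by (subst sum.swap) (simp add: sum.swap[of _ "{..<n}" "{..<m}"])
  finally show ?thesis
    unfolding wmul_adj_def mvmult_def sum_lessThan_mult_blocks[of _ n m] wmul_def
    by (simp add: sum_distrib_left mult.assoc)
qed

lemma qform_compress: "qform n (compress n m w C) v = qform (n*m) C (wmul n w v)"
proof -
  let ?Y = "mvmult (n*m) C (wmul n w v)"
  have "qform n (compress n m w C) v = (\<Sum>r<n. \<Sum>a<m. cnj (v r) * (cnj (w (a*n+r)) * ?Y (a*n+r)))"
    unfolding qform_eq_mvmult mvmult_compress wmul_adj_def by (simp add: sum_distrib_left)
  also have "\<dots> = (\<Sum>a<m. \<Sum>r<n. cnj (v r) * (cnj (w (a*n+r)) * ?Y (a*n+r)))"
    by (rule sum.swap)
  also have "\<dots> = qform (n*m) C (wmul n w v)"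
    unfolding qform_eq_mvmult sum_lessThan_mult_blocks[of _ n m] wmul_def by (simp add: algebra_simps)
  finally show ?thesis .
qed

lemma psd_compress: "psd (n*m) C \<Longrightarrow> psd n (compress n m w C)"
  unfolding psd_def by (simp add: qform_compress)

lemma hadamard_compress_kron_ones:
  "r < n \<Longrightarrow> s < n \<Longrightarrow>
    hadamard A (compress n m w C) r s = compress n m w (hadamard (kron n ones A) C) r s"
  by (simp add: compress_def hadamard_def kron_def ones_def sum_distrib_left algebra_simps)

context
  fixes n m :: nat and w :: cvec
  assumes cols: "\<And>r. r < n \<Longrightarrow> (\<Sum>a<m. (cmod (w (a*n+r)))\<^sup>2) \<le> 1"
begin

lemma sqnorm_wmul_le: "sqnorm (n*m) (wmul n w v) \<le> sqnorm n v"
proof -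
  have "sqnorm (n*m) (wmul n w v) = (\<Sum>r<n. (\<Sum>a<m. (cmod (w (a*n+r)))\<^sup>2) * (cmod (v r))\<^sup>2)"
    unfolding sqnorm_def sum_lessThan_mult_blocks[of _ n m] wmul_def
    by (subst sum.swap) (simp add: norm_mult power_mult_distrib sum_distrib_right)
  also have "\<dots> \<le> (\<Sum>r<n. 1 * (cmod (v r))\<^sup>2)"
    by (intro sum_mono mult_right_mono cols) auto
  finally show ?thesis unfolding sqnorm_def by simp
qed

lemma sqnorm_wmul_adj_le: "sqnorm n (wmul_adj n m w y) \<le> sqnorm (n*m) y"
proof -
  have "sqnorm n (wmul_adj n m w y)
      \<le> (\<Sum>r<n. (\<Sum>a<m. (cmod (w (a*n+r)))\<^sup>2) * (\<Sum>a<m. (cmod (y (a*n+r)))\<^sup>2))"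
    unfolding sqnorm_def wmul_adj_def
    using cmod_sum_mult_power2_le[of "\<lambda>a. cnj (w (a*n+_))" "\<lambda>a. y (a*n+_)" "{..<m}"]
    by (intro sum_mono) simp
  also have "\<dots> \<le> (\<Sum>r<n. 1 * (\<Sum>a<m. (cmod (y (a*n+r)))\<^sup>2))"
    by (intro sum_mono mult_right_mono cols) (auto intro: sum_nonneg)
  also have "\<dots> = sqnorm (n*m) y"
    unfolding sqnorm_def sum_lessThan_mult_blocks[of _ n m] by (simp add: sum.swap[of _ "{..<n}"])
  finally show ?thesis .
qed

lemma opnorm_compress_le: "opnorm n (compress n m w C) \<le> opnorm (n*m) C"
proof (rule opnorm_leI)
  fix v assume v: "vnorm n v \<le> 1"
  have "sqnorm n (mvmult n (compress n m w C) v) \<le> sqnorm (n*m) (mvmult (n*m) C (wmul n w v))"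
    using sqnorm_wmul_adj_le by (simp add: mvmult_compress cong: sqnorm_cong)
  also have "\<dots> \<le> (opnorm (n*m) C * vnorm (n*m) (wmul n w v))\<^sup>2"
    unfolding vnorm_power2[symmetric] by (intro power_mono vnorm_mvmult_le vnorm_nonneg)
  also have "\<dots> \<le> (opnorm (n*m) C)\<^sup>2"
    using sqnorm_wmul_le[of v] v
    by (simp add: power_mult_distrib vnorm_power2 vnorm_le_1_iff mult_left_le)
  finally show "vnorm n (mvmult n (compress n m w C) v) \<le> opnorm (n*m) C"
    using opnorm_nonneg by (simp add: vnorm_eq_sqrt_sqnorm real_le_lsqrt)
qed

end

text \<open>z_r is the norm of the r-th residue class (x_(an+r))_(a<m) of x, and w is x with
  every nonzero residue class normalised.\<close>

lemma wmul_factorization: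
  obtains w z where "\<And>r. r < n \<Longrightarrow> (\<Sum>a<m. (cmod (w (a*n+r)))\<^sup>2) \<le> 1"
    and "\<And>i. i < n*m \<Longrightarrow> wmul n w z i = x i"
    and "sqnorm n z = sqnorm (n*m) x"
proof
  define zr where "zr = (\<lambda>r. sqrt (\<Sum>a<m. (cmod (x (a*n+r)))\<^sup>2))"
  have zr2: "(zr r)\<^sup>2 = (\<Sum>a<m. (cmod (x (a*n+r)))\<^sup>2)" for r
    unfolding zr_def by (simp add: sum_nonneg)
  define w where "w = (\<lambda>i. if zr (i mod n) = 0 then 0 else x i / of_real (zr (i mod n)))"
  define z where "z = (\<lambda>r. complex_of_real (zr r))"
  show "(\<Sum>a<m. (cmod (w (a*n+r)))\<^sup>2) \<le> 1" if r: "r < n" for r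
  proof (cases "zr r = 0")
    case False
    have "(\<Sum>a<m. (cmod (w (a*n+r)))\<^sup>2) = (\<Sum>a<m. (cmod (x (a*n+r)))\<^sup>2) / (zr r)\<^sup>2"
      unfolding w_def using r False by (simp add: norm_divide power_divide sum_divide_distrib)
    then show ?thesis using False by (simp add: zr2)
  qed (simp add: w_def r)
  show "wmul n w z i = x i" if i: "i < n*m" for i
  proof (cases "zr (i mod n) = 0")
    case True
    have "(\<Sum>a<m. (cmod (x (a*n + i mod n)))\<^sup>2) = 0"
      using True zr2[of "i mod n"] by simp
    then have "\<forall>a<m. x (a*n + i mod n) = 0"
      by (simp add: sum_nonneg_eq_0_iff)
    moreover have "i div n < m" using i by (simp add: less_mult_imp_div_less mult.commute)
    ultimately have "x (i div n * n + i mod n) = 0" by blast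
    then show ?thesis unfolding wmul_def w_def using True by simp
  qed (simp add: wmul_def w_def z_def)
  show "sqnorm n z = sqnorm (n*m) x"
    unfolding sqnorm_def sum_lessThan_mult_blocks[of _ n m] z_def
    by (simp add: zr2 sum.swap[of _ "{..<n}"])
qed

lemma Isp_mult_qform_le:
  assumes "psd (n*m) B" "vnorm (n*m) x \<le> 1"
  shows "Isp n A * Re (qform (n*m) B x) \<le> opnorm (n*m) (hadamard (kron n ones A) B)"
proof -
  obtain w z where cols: "\<And>r. r < n \<Longrightarrow> (\<Sum>a<m. (cmod (w (a*n+r)))\<^sup>2) \<le> 1"
    and x: "\<And>i. i < n*m \<Longrightarrow> wmul n w z i = x i" and z: "sqnorm n z = sqnorm (n*m) x"
    using wmul_factorization by metis
  define C where "C = compress n m w B"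
  have "psd n C" unfolding C_def using assms(1) by (rule psd_compress)
  have "Re (qform (n*m) B x) = Re (qform n C z)"
    unfolding C_def qform_compress by (simp add: x cong: qform_cong)
  also have "\<dots> \<le> opnorm n C * sqnorm n z"
    using complex_Re_le_cmod cmod_qform_le order_trans by blast
  also have "\<dots> \<le> opnorm n C"
    using z assms(2) opnorm_nonneg[of n C] by (simp add: vnorm_le_1_iff mult_left_le)
  finally have qC: "Re (qform (n*m) B x) \<le> opnorm n C" .
  have "opnorm n (hadamard A C) = opnorm n (compress n m w (hadamard (kron n ones A) B))"
    unfolding C_def by (intro opnorm_cong hadamard_compress_kron_ones)
  also have "\<dots> \<le> opnorm (n*m) (hadamard (kron n ones A) B)"
    by (rule opnorm_compress_le[OF cols])
  finally have IC: "Isp n A * opnorm n C \<le> opnorm (n*m) (hadamard (kron n ones A) B)"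
    using Isp_mult_opnorm_le[OF \<open>psd n C\<close>, of A] by linarith
  show ?thesis
  proof (cases "Isp n A \<le> 0")
    case True
    have "0 \<le> Re (qform (n*m) B x)" using assms(1) unfolding psd_def by simp
    then show ?thesis using True opnorm_nonneg by (meson mult_nonpos_nonneg order_trans)
  next
    case False
    then have "Isp n A * Re (qform (n*m) B x) \<le> Isp n A * opnorm n C"
      using qC by (simp add: mult_left_mono)
    then show ?thesis using IC by linarith
  qed
qed

lemma Isp_le_kron_ones:
  assumes "n > 0" "m > 0"
  shows "Isp n A \<le> Isp (n*m) (kron n ones A)"
  unfolding Isp_def[of "n*m"]
proof (rule cInf_greatest)
  have "opnorm (n*m) id_mat = 1" using assms by (simp add: opnorm_id_mat)
  then show "{opnorm (n*m) (hadamard (kron n ones A) B) | B. psd (n*m) B \<and> opnorm (n*m) B = 1} \<noteq> {}"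
    using psd_id_mat by blast
  fix y assume "y \<in> {opnorm (n*m) (hadamard (kron n ones A) B) | B. psd (n*m) B \<and> opnorm (n*m) B = 1}"
  then obtain B where B: "psd (n*m) B" "opnorm (n*m) B = 1"
    and y: "y = opnorm (n*m) (hadamard (kron n ones A) B)" by blast
  show "Isp n A \<le> y"
  proof (cases "Isp n A > 0")
    case True
    have "Re (qform (n*m) B x) \<le> y / Isp n A" if "vnorm (n*m) x \<le> 1" for x
      using Isp_mult_qform_le[OF B(1) that, of A] True
      by (simp add: y le_divide_eq mult.commute)
    then have "opnorm (n*m) B \<le> y / Isp n A"
      by (rule psd_opnorm_le_qform[OF B(1)])
    then show ?thesis using True B(2) by (simp add: le_divide_eq)
  next
    case False
    then show ?thesis using y opnorm_nonneg[of "n*m"] by (simp add: not_less order_trans)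
  qed
qed

theorem mainTheorem3:
  fixes A :: cmat and n m :: nat
  assumes "n \<ge> 1" and "m \<ge> 1"
    and "psd n A"
  shows "psd (n * m) (kron n ones A)
    \<and> Iidx (n * m) (kron n ones A) = Iidx n A
    \<and> Isp (n * m) (kron n ones A) = Isp n A"
proof -
  have n0: "n > 0" and m0: "m > 0" using assms by auto
  have "Isp (n * m) (kron n ones A) = Isp n A"
    using Isp_kron_ones_le[OF n0 m0] Isp_le_kron_ones[OF n0 m0] by (rule antisym)
  then show ?thesis
    using psd_kron_ones_iff[OF m0] assms(3) Iidx_kron_ones[OF m0] by simp
qed

end
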